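(* In the setting described in the context, there exists a collection $\Gamma=\{\gamma_{xy}:(x,y)\in\Omega_{worm}\times\Omega_0\}$, where each $\gamma_{xy}$ is a path from $x$ to $y$ through states of $\Omega_{worm}$ in which consecutive states differ in exactly one edge of $E_C$ (i.e. each step is a move of the chain $P$), such that $$\varrho(\Omega_0;\Gamma)\le m^5|E_C|.$$
   Context: Let $\beta>1$. Let $G=(V,E)$ be a finite connected simple 4-regular graph with, at each vertex, its four incident edges labelled bijectively $x_1,\dots,x_4$. Each edge has two half-edges. Pairing at each vertex slot $x_1$ with $x_4$ and $x_2$ with $x_3$, and following edges by entering a vertex through one slot of a pair and leaving through the other, partitions $E$ into closed trails (circuits) $C_1,\dots,C_m$, each with a fixed reference half-edge $h_i$. Consider maps $\sigma$ from half-edges to $\{0,1\}$ with opposite values on the two half-edges of each edge and nonzero weight for the vertex function $f^*$ with $f^*(0011)=f^*(1100)=\beta$, $f^*(0101)=f^*(1010)=1$, $f^*=0$ otherwise (evaluated at $v$ on its half-edges in slot order $x_1,\dots,x_4$); values alternate along circuits and $\sigma(C_i):=\sigma(h_i)$. A vertex where $\{x_1,x_4\}$ lies on $C_i$ and $\{x_2,x_3\}$ on $C_j$, $i\ne j$, is an agree-vertex if its weight is $\beta$ exactly when $\sigma(C_i)=\sigma(C_j)$ (else $1$), and a disagree-vertex if its weight is $\beta$ exactly when $\sigma(C_i)\ne\sigma(C_j)$; $A(i,j),D(i,j)$ count these. $G_C=(\mathcal{C},E_C)$, $\mathcal{C}=\{C_1,\dots,C_m\}$, has edge $\{C_i,C_j\}$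 iff $i\ne j$ and they share such a vertex. Assume the system $X_u\oplus X_v=\mathbf{I}(A(u,v)<D(u,v))$, $\{u,v\}\in E_C$, has a solution over $\mathrm{GF}(2)$; for each $i$ with $X_i=1$ replace $h_i$ by an adjacent half-edge of $C_i$, recompute $A,D$, and set $\beta_e=\beta^{A(u,v)-D(u,v)}$, $x_e=(\beta_e-1)/(\beta_e+1)$ for $e=\{u,v\}\in E_C$. Worm process. $\Omega_k$ is the set of $S\subseteq E_C$ with exactly $k$ odd-degree vertices in $(\mathcal{C},S)$; $\partial S$ is that set of odd-degree vertices; $\Omega_{worm}=\Omega_0\cup\Omega_2$. $w(S)=\prod_{e\in S}x_e$, $Z_k=\sum_{S\in\Omega_k}w(S)$, $\xi(S)=m$ on $\Omega_0$, $2$ on $\Omega_2$, $0$ otherwise, $\pi_{worm}(S)=\xi(S)w(S)/(mZ_0+2Z_2)$. $d(u)$ is the degree of $u$ in $G_C$. The transition matrix $P$ on $\Omega_{worm}$: for $A\in\Omega_{worm}$ and $\{u,v\}\in E_C$, writing $A\oplus uv$ for the symmetric difference of $A$ with $\{\{u,v\}\}$: $P(A,A\oplus uv)=x_{uv}^{\mathbf{I}(uv\notin A)}\frac{1}{2m}\big(\frac{1}{d(u)}+\frac1{d(v)}\big)$ if $A\in\Omega_0$; $=x_{uv}^{\mathbf{I}(uv\notin A)}\frac14\big(\frac1{d(u)}+\frac1{d(v)}\big)$ if $A\oplus uv\in\Omega_0$; $=\min\!\big(1,\frac{d(u)}{d(v)}x_{uv}^{\mathbf{I}(uv\notin A)-\mathbf{I}(uv\in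 A)}\big)\frac1{4d(u)}$ if $A,A\oplus uv\in\Omega_2$ and $u\in\partial A$; all other off-diagonal entries are $0$ and each diagonal entry is $1$ minus the other entries of its row. Congestion. For $\Psi\subseteq\Omega_{worm}$ and a collection $\Gamma$ of paths $\gamma_{xy}$, $(x,y)\in\Omega_{worm}\times\Psi$, with $L(\Gamma)$ the length of the longest path, $$\varrho(\Psi;\Gamma)=\max_{(z,z')\,:\,P(z,z')>0}\frac{L(\Gamma)}{\pi_{worm}(\Psi)\pi_{worm}(z)P(z,z')}\sum_{(x,y)\in\Omega_{worm}\times\Psi,\ \gamma_{xy}\ni(z,z')}\pi_{worm}(x)\pi_{worm}(y).$$ *)

theory Defs
  imports Complex_Main
begin

text \<open>Half-edges are pairs (v,k) with v a vertex and k in {1..4} the slot label x_k.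
  The map opp sends a half-edge to the other half-edge of the same edge.\<close>

definition HE :: "'v set \<Rightarrow> ('v \<times> nat) set" where
  "HE V = V \<times> {1..4}"

definition partner :: "'v \<times> nat \<Rightarrow> 'v \<times> nat" where
  "partner h = (fst h, 5 - snd h)"

definition adj :: "'v set \<Rightarrow> ('v \<times> nat \<Rightarrow> 'v \<times> nat) \<Rightarrow> ('v \<times> 'v) set" where
  "adj V opp = {(fst h, fst (opp h)) | h. h \<in> HE V}"

definition labelled_4reg :: "'v set \<Rightarrow> ('v \<times> nat \<Rightarrow> 'v \<times> nat) \<Rightarrow> bool" where
  "labelled_4reg V opp \<longleftrightarrow>
     finite V \<and> V \<noteq> {} \<and>
     (\<forall>h\<in>HE V. opp h \<in> HE V \<and> opp (opp h) = h \<and> fst (opp h) \<noteq> fst h) \<and>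
     (\<forall>v\<in>V. \<forall>i\<in>{1..4}. \<forall>j\<in>{1..4}. i \<noteq> j \<longrightarrow> fst (opp (v,i)) \<noteq> fst (opp (v,j))) \<and>
     (\<forall>u\<in>V. \<forall>w\<in>V. (u, w) \<in> (adj V opp)\<^sup>*)"

text \<open>Circuits: closed trails, as sets of half-edges = classes of the equivalence
  generated by opp (traversing an edge) and partner (passing through a vertex).\<close>
definition circ_step :: "'v set \<Rightarrow> ('v \<times> nat \<Rightarrow> 'v \<times> nat) \<Rightarrow> (('v \<times> nat) \<times> ('v \<times> nat)) set" where
  "circ_step V opp = {(h, opp h) | h. h \<in> HE V} \<union> {(h, partner h) | h. h \<in> HE V}"

definition circuits :: "'v set \<Rightarrow> ('v \<times> nat \<Rightarrow> 'v \<times> nat) \<Rightarrow> ('v \<times> nat) set set" where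
  "circuits V opp = {(circ_step V opp)\<^sup>* `` {h} | h. h \<in> HE V}"

text \<open>Vertex function f*, with False = 0 and True = 1.\<close>
definition fstar :: "real \<Rightarrow> bool \<Rightarrow> bool \<Rightarrow> bool \<Rightarrow> bool \<Rightarrow> real" where
  "fstar \<beta> a b c d =
     (if (a, b, c, d) = (False, False, True, True) \<or> (a, b, c, d) = (True, True, False, False) then \<beta>
      else if (a, b, c, d) = (False, True, False, True) \<or> (a, b, c, d) = (True, False, True, False) then 1
      else 0)"

definition vweight :: "real \<Rightarrow> ('v \<times> nat \<Rightarrow> bool) \<Rightarrow> 'v \<Rightarrow> real" where
  "vweight \<beta> \<sigma> v = fstar \<beta> (\<sigma> (v,1)) (\<sigma> (v,2)) (\<sigma> (v,3)) (\<sigma> (v,4))"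

definition valid_sigma :: "'v set \<Rightarrow> ('v \<times> nat \<Rightarrow> 'v \<times> nat) \<Rightarrow> real \<Rightarrow> ('v \<times> nat \<Rightarrow> bool) \<Rightarrow> bool" where
  "valid_sigma V opp \<beta> \<sigma> \<longleftrightarrow>
     (\<forall>h\<in>HE V. \<sigma> (opp h) = (\<not> \<sigma> h)) \<and> (\<forall>v\<in>V. vweight \<beta> \<sigma> v \<noteq> 0)"

text \<open>h is the choice of reference half-edges, sigma(C) = sigma(h C).\<close>
definition agree_vertex :: "'v set \<Rightarrow> ('v \<times> nat \<Rightarrow> 'v \<times> nat) \<Rightarrow> real \<Rightarrow> (('v \<times> nat) set \<Rightarrow> 'v \<times> nat)
     \<Rightarrow> 'v \<Rightarrow> ('v \<times> nat) set \<Rightarrow> ('v \<times> nat) set \<Rightarrow> bool" where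
  "agree_vertex V opp \<beta> h v C D \<longleftrightarrow>
     (\<forall>\<sigma>. valid_sigma V opp \<beta> \<sigma> \<longrightarrow> (vweight \<beta> \<sigma> v = \<beta> \<longleftrightarrow> \<sigma> (h C) = \<sigma> (h D)))"

definition disagree_vertex :: "'v set \<Rightarrow> ('v \<times> nat \<Rightarrow> 'v \<times> nat) \<Rightarrow> real \<Rightarrow> (('v \<times> nat) set \<Rightarrow> 'v \<times> nat)
     \<Rightarrow> 'v \<Rightarrow> ('v \<times> nat) set \<Rightarrow> ('v \<times> nat) set \<Rightarrow> bool" where
  "disagree_vertex V opp \<beta> h v C D \<longleftrightarrow>
     (\<forall>\<sigma>. valid_sigma V opp \<beta> \<sigma> \<longrightarrow> (vweight \<beta> \<sigma> v = \<beta> \<longleftrightarrow> \<sigma> (h C) \<noteq> \<sigma> (h D)))"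

text \<open>A(e), D(e) for e = {C,D}: vertices where {x1,x4} lies on one of the two circuits
  and {x2,x3} on the other (either order).\<close>
definition A_cnt :: "'v set \<Rightarrow> ('v \<times> nat \<Rightarrow> 'v \<times> nat) \<Rightarrow> real \<Rightarrow> (('v \<times> nat) set \<Rightarrow> 'v \<times> nat)
     \<Rightarrow> ('v \<times> nat) set set \<Rightarrow> nat" where
  "A_cnt V opp \<beta> h e = card {v \<in> V. \<exists>C D. e = {C, D} \<and> C \<noteq> D \<and> (v,1) \<in> C \<and> (v,2) \<in> D
                                     \<and> agree_vertex V opp \<beta> h v C D}"

definition D_cnt :: "'v set \<Rightarrow> ('v \<times> nat \<Rightarrow> 'v \<times> nat) \<Rightarrow> real \<Rightarrow> (('v \<times> nat) set \<Rightarrow> 'v \<times> nat)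
     \<Rightarrow> ('v \<times> nat) set set \<Rightarrow> nat" where
  "D_cnt V opp \<beta> h e = card {v \<in> V. \<exists>C D. e = {C, D} \<and> C \<noteq> D \<and> (v,1) \<in> C \<and> (v,2) \<in> D
                                     \<and> disagree_vertex V opp \<beta> h v C D}"

definition EC :: "'v set \<Rightarrow> ('v \<times> nat \<Rightarrow> 'v \<times> nat) \<Rightarrow> ('v \<times> nat) set set set" where
  "EC V opp = {{C, D} | C D. C \<in> circuits V opp \<and> D \<in> circuits V opp \<and> C \<noteq> D \<and>
                            (\<exists>v\<in>V. (v,1) \<in> C \<and> (v,2) \<in> D)}"

definition xw :: "'v set \<Rightarrow> ('v \<times> nat \<Rightarrow> 'v \<times> nat) \<Rightarrow> real \<Rightarrow> (('v \<times> nat) set \<Rightarrow> 'v \<times> nat)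
     \<Rightarrow> ('v \<times> nat) set set \<Rightarrow> real" where
  "xw V opp \<beta> h e =
     (let b = \<beta> powi (int (A_cnt V opp \<beta> h e) - int (D_cnt V opp \<beta> h e)) in (b - 1) / (b + 1))"

definition deg :: "'c set set \<Rightarrow> 'c \<Rightarrow> nat" where
  "deg Es u = card {e \<in> Es. u \<in> e}"

definition odd_verts :: "'c set \<Rightarrow> 'c set set \<Rightarrow> 'c set" where
  "odd_verts Cs S = {u \<in> Cs. odd (card {e \<in> S. u \<in> e})}"

definition Omega :: "'c set \<Rightarrow> 'c set set \<Rightarrow> nat \<Rightarrow> 'c set set set" where
  "Omega Cs Es k = {S. S \<subseteq> Es \<and> card (odd_verts Cs S) = k}"

definition Omega_worm :: "'c set \<Rightarrow> 'c set set \<Rightarrow> 'c set set set" where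
  "Omega_worm Cs Es = Omega Cs Es 0 \<union> Omega Cs Es 2"

definition wt :: "('c set \<Rightarrow> real) \<Rightarrow> 'c set set \<Rightarrow> real" where
  "wt x S = (\<Prod>e\<in>S. x e)"

definition Zk :: "'c set \<Rightarrow> 'c set set \<Rightarrow> ('c set \<Rightarrow> real) \<Rightarrow> nat \<Rightarrow> real" where
  "Zk Cs Es x k = (\<Sum>S\<in>Omega Cs Es k. wt x S)"

definition xi :: "'c set \<Rightarrow> 'c set set \<Rightarrow> 'c set set \<Rightarrow> real" where
  "xi Cs Es S = (if S \<in> Omega Cs Es 0 then real (card Cs) else if S \<in> Omega Cs Es 2 then 2 else 0)"

definition pi_worm :: "'c set \<Rightarrow> 'c set set \<Rightarrow> ('c set \<Rightarrow> real) \<Rightarrow> 'c set set \<Rightarrow> real" where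
  "pi_worm Cs Es x S = xi Cs Es S * wt x S / (real (card Cs) * Zk Cs Es x 0 + 2 * Zk Cs Es x 2)"

definition pi_set :: "'c set \<Rightarrow> 'c set set \<Rightarrow> ('c set \<Rightarrow> real) \<Rightarrow> 'c set set set \<Rightarrow> real" where
  "pi_set Cs Es x Psi = (\<Sum>S\<in>Psi. pi_worm Cs Es x S)"

definition toggle :: "'c set set \<Rightarrow> 'c set \<Rightarrow> 'c set set" where
  "toggle A e = (if e \<in> A then A - {e} else insert e A)"

text \<open>The factor
  x^(I(e notin A) - I(e in A)) inside the min is rendered as: x if e notin A, and
  min(1, r / x) written as (if x <= r then 1 else r / x) if e in A (so x = 0 gives 1).\<close>
definition P_move :: "'c set \<Rightarrow> 'c set set \<Rightarrow> ('c set \<Rightarrow> real) \<Rightarrow> 'c set set \<Rightarrow> 'c set \<Rightarrow> real" where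
  "P_move Cs Es x A e =
    (let ex = (if e \<notin> A then x e else 1);
         s = (\<Sum>u\<in>e. 1 / real (deg Es u)) in
     if A \<in> Omega Cs Es 0 then ex * (1 / (2 * real (card Cs))) * s
     else if toggle A e \<in> Omega Cs Es 0 then ex * (1 / 4) * s
     else if A \<in> Omega Cs Es 2 \<and> toggle A e \<in> Omega Cs Es 2 then
       (let u = (THE u. u \<in> e \<and> u \<in> odd_verts Cs A);
            v = (THE v. v \<in> e \<and> v \<noteq> u);
            r = real (deg Es u) / real (deg Es v) in
        (if e \<notin> A then min 1 (r * x e) else (if x e \<le> r then 1 else r / x e))
          * (1 / (4 * real (deg Es u))))
     else 0)"

definition P_off :: "'c set \<Rightarrow> 'c set set \<Rightarrow> ('c set \<Rightarrow> real) \<Rightarrow> 'c set set \<Rightarrow> 'c set set \<Rightarrow> real" where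
  "P_off Cs Es x A B =
     (if A \<noteq> B \<and> (\<exists>e\<in>Es. B = toggle A e) then P_move Cs Es x A (THE e. e \<in> Es \<and> B = toggle A e) else 0)"

definition P_worm :: "'c set \<Rightarrow> 'c set set \<Rightarrow> ('c set \<Rightarrow> real) \<Rightarrow> 'c set set \<Rightarrow> 'c set set \<Rightarrow> real" where
  "P_worm Cs Es x A B =
     (if A = B then 1 - (\<Sum>B'\<in>Omega_worm Cs Es - {A}. P_off Cs Es x A B') else P_off Cs Es x A B)"

definition is_worm_path :: "'c set \<Rightarrow> 'c set set \<Rightarrow> 'c set set \<Rightarrow> 'c set set \<Rightarrow> 'c set set list \<Rightarrow> bool" where
  "is_worm_path Cs Es a b p \<longleftrightarrow>
     p \<noteq> [] \<and> hd p = a \<and> last p = b \<and> set p \<subseteq> Omega_worm Cs Es \<and>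
     (\<forall>(s, t)\<in>set (zip p (tl p)). \<exists>e\<in>Es. t = toggle s e)"

definition transitions :: "'s list \<Rightarrow> ('s \<times> 's) set" where
  "transitions p = set (zip p (tl p))"

definition congestion :: "'c set \<Rightarrow> 'c set set \<Rightarrow> ('c set \<Rightarrow> real) \<Rightarrow> 'c set set set
     \<Rightarrow> ('c set set \<Rightarrow> 'c set set \<Rightarrow> 'c set set list) \<Rightarrow> real" where
  "congestion Cs Es x Psi gam =
    (let Ow = Omega_worm Cs Es;
         L = real (Max {length (gam a b) - 1 | a b. a \<in> Ow \<and> b \<in> Psi}) in
     Max ((\<lambda>(z, z'). L / (pi_set Cs Es x Psi * pi_worm Cs Es x z * P_worm Cs Es x z z') *
              (\<Sum>(a, b)\<in>{(a, b). a \<in> Ow \<and> b \<in> Psi \<and> (z, z') \<in> transitions (gam a b)}.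
                  pi_worm Cs Es x a * pi_worm Cs Es x b))
          ` {(z, z'). z \<in> Ow \<and> z' \<in> Ow \<and> P_worm Cs Es x z z' > 0}))"

end

theory Submission
  imports Defs
begin

text \<open>The canonical path from a worm state a to an even state b toggles the edges of a \<Delta> b
  one at a time, in an order keeping every intermediate state a worm state: from a worm one can
  always remove an edge at one of its ends, and from an even state any edge. If such a path uses
  the move from z to z \<Delta> {e}, then a and b agree with z \<union> {e} outside a \<Delta> b, so
  w(a) w(b) = w(z \<union> {e}) w(\<eta>) with \<eta> = a \<Delta> b \<Delta> (z \<union> {e}). The pair (a, b) can be
  recovered from \<eta>, and the odd vertices of \<eta> form one of at most m^2 sets. Since re-referencing
  makes A(e) \<ge> D(e), all weights x_e lie in [0,1], and a Fourier argument over the subsets of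
  the circuits then bounds the weight of all edge sets with prescribed odd vertices by Z_0.
  Combined with xi(z) P(z, z \<Delta> {e}) \<ge> x_e/(2m) (or 1/(2m) if e \<in> z) and paths of length at
  most |E_C|, every transition carries congestion at most m^5 |E_C|.\<close>

section \<open>Symmetric differences and parity characters\<close>

lemma card_sym_diff_add:
  assumes "finite A" "finite B"
  shows "card (sym_diff A B) + 2 * card (A \<inter> B) = card A + card B"
proof -
  have "card (sym_diff A B) = card (A - B) + card (B - A)"
    using assms by (subst card_Un_disjoint) auto
  moreover have "card A = card (A \<inter> B) + card (A - B)" "card B = card (A \<inter> B) + card (B - A)"
    using card_Int_Diff[OF assms(1), of B] card_Int_Diff[OF assms(2), of A] by (simp_all add: Int_commute)
  ultimately show ?thesis by simp
qed

lemma odd_verts_sym_diff: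
  assumes "finite A" "finite B"
  shows "odd_verts Cs (sym_diff A B) = sym_diff (odd_verts Cs A) (odd_verts Cs B)"
proof -
  have "odd (card {e \<in> sym_diff A B. u \<in> e}) \<longleftrightarrow>
        odd (card {e \<in> A. u \<in> e}) \<noteq> odd (card {e \<in> B. u \<in> e})" for u
  proof -
    have "card (sym_diff {e \<in> A. u \<in> e} {e \<in> B. u \<in> e}) + 2 * card ({e \<in> A. u \<in> e} \<inter> {e \<in> B. u \<in> e})
        = card {e \<in> A. u \<in> e} + card {e \<in> B. u \<in> e}"
      using assms by (intro card_sym_diff_add) auto
    moreover have "sym_diff {e \<in> A. u \<in> e} {e \<in> B. u \<in> e} = {e \<in> sym_diff A B. u \<in> e}" by auto
    ultimately have "card {e \<in> sym_diff A B. u \<in> e} + 2 * card ({e \<in> A. u \<in> e} \<inter> {e \<in> B. u \<in> e})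
        = card {e \<in> A. u \<in> e} + card {e \<in> B. u \<in> e}" by simp
    then show ?thesis by presburger
  qed
  then show ?thesis unfolding odd_verts_def by auto
qed

lemma toggle_eq_sym_diff: "toggle A e = sym_diff A {e}"
  unfolding toggle_def by auto

lemma toggle_inj: "toggle A e = toggle A f \<Longrightarrow> e = f"
  unfolding toggle_def by (auto split: if_splits)

lemma toggle_neq: "toggle A e \<noteq> A"
  unfolding toggle_def by auto

lemma sym_diff_insert_toggle: "f \<notin> T \<Longrightarrow> sym_diff A (insert f T) = toggle (sym_diff A T) f"
  unfolding toggle_def by auto

lemma wt_mult_exchange:
  assumes "finite A" "finite B" "finite Y" "\<And>f. f \<notin> sym_diff A B \<Longrightarrow> f \<in> Y \<longleftrightarrow> f \<in> A"
  shows "wt x A * wt x B = wt x Y * wt x (sym_diff (sym_diff A B) Y)"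
proof -
  let ?S = "sym_diff (sym_diff A B) Y"
  have "A \<union> B = Y \<union> ?S" "A \<inter> B = Y \<inter> ?S"
    using assms(4) by blast+
  moreover have "wt x A * wt x B = wt x (A \<union> B) * wt x (A \<inter> B)"
    unfolding wt_def using assms by (intro prod.union_inter[symmetric]) auto
  moreover have "wt x (Y \<union> ?S) * wt x (Y \<inter> ?S) = wt x Y * wt x ?S"
    unfolding wt_def using assms by (intro prod.union_inter) auto
  ultimately show ?thesis by simp
qed

lemma card_subsets_card_0_or_2_le:
  assumes "finite C" "C \<noteq> {}"
  shows "card {P. P \<subseteq> C \<and> (card P = 0 \<or> card P = 2)} \<le> card C * card C"
proof -
  obtain c where "c \<in> C" using assms(2) by blast
  have "{P. P \<subseteq> C \<and> (card P = 0 \<or> card P = 2)} \<subseteq> (\<lambda>(u, v). if u = v then {} else {u, v}) ` (C \<times> C)"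
  proof
    fix P assume P: "P \<in> {P. P \<subseteq> C \<and> (card P = 0 \<or> card P = 2)}"
    moreover have "finite P" using P assms(1) finite_subset by blast
    ultimately have "P = {} \<or> (\<exists>u v. P = {u, v} \<and> u \<noteq> v)"
      by (auto simp: card_2_iff)
    then show "P \<in> (\<lambda>(u, v). if u = v then {} else {u, v}) ` (C \<times> C)"
      using P \<open>c \<in> C\<close> by (auto intro: image_eqI[of _ _ "(c, c)"] image_eqI[of _ _ "(u, v)" for u v])
  qed
  then have "card {P. P \<subseteq> C \<and> (card P = 0 \<or> card P = 2)} \<le> card (C \<times> C)"
    using assms(1) by (meson card_image_le card_mono finite_SigmaI finite_imageI order_trans)
  then show ?thesis by (simp add: card_cartesian_product)
qed

definition parity_char :: "'a set \<Rightarrow> 'a set \<Rightarrow> real" where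
  "parity_char A Q = (-1) ^ card (A \<inter> Q)"

lemma parity_char_mult:
  assumes "finite Q"
  shows "parity_char A Q * parity_char B Q = parity_char (sym_diff A B) Q"
proof -
  have "card (sym_diff (A \<inter> Q) (B \<inter> Q)) + 2 * card (A \<inter> Q \<inter> (B \<inter> Q)) = card (A \<inter> Q) + card (B \<inter> Q)"
    using assms by (intro card_sym_diff_add) auto
  moreover have "sym_diff (A \<inter> Q) (B \<inter> Q) = sym_diff A B \<inter> Q" by blast
  ultimately have "card (A \<inter> Q) + card (B \<inter> Q) = card (sym_diff A B \<inter> Q) + 2 * card (A \<inter> B \<inter> Q)"
    by (simp add: Int_ac)
  then have "(-1::real) ^ (card (A \<inter> Q) + card (B \<inter> Q)) = (-1) ^ card (sym_diff A B \<inter> Q)"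
    by (simp add: power_add power_mult)
  then show ?thesis unfolding parity_char_def by (simp add: power_add)
qed

lemma parity_char_cases: "parity_char A Q = 1 \<or> parity_char A Q = -1"
  unfolding parity_char_def by (cases "even (card (A \<inter> Q))") auto

lemma sum_parity_char_Pow:
  assumes "finite C" "A \<subseteq> C"
  shows "(\<Sum>Q\<in>Pow C. parity_char A Q) = (if A = {} then 2 ^ card C else 0)"
proof (cases "A = {}")
  case True
  then show ?thesis using assms(1) by (simp add: parity_char_def card_Pow)
next
  case False
  then obtain a where a: "a \<in> A" by blast
  define C' where "C' = C - {a}"
  have C: "C = insert a C'" "a \<notin> C'" "finite C'" using a assms C'_def by auto
  have "Pow C = Pow C' \<union> insert a ` Pow C'" "Pow C' \<inter> insert a ` Pow C' = {}"
    using C by (auto simp: Pow_insert)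
  then have "(\<Sum>Q\<in>Pow C. parity_char A Q) = (\<Sum>Q\<in>Pow C'. parity_char A Q) + (\<Sum>Q\<in>insert a ` Pow C'. parity_char A Q)"
    using C(3) by (simp add: sum.union_disjoint)
  also have "(\<Sum>Q\<in>insert a ` Pow C'. parity_char A Q) = (\<Sum>Q\<in>Pow C'. parity_char A (insert a Q))"
    using C(2) by (intro sum.reindex_cong[where l="insert a"]) (auto simp: inj_on_def)
  also have "(\<Sum>Q\<in>Pow C'. parity_char A Q) + \<dots> = (\<Sum>Q\<in>Pow C'. parity_char A Q + parity_char A (insert a Q))"
    by (simp add: sum.distrib)
  also have "\<dots> = 0"
  proof (rule sum.neutral, intro ballI)
    fix Q assume "Q \<in> Pow C'"
    then have "A \<inter> insert a Q = insert a (A \<inter> Q)" "a \<notin> A \<inter> Q" "finite (A \<inter> Q)"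
      using a C finite_subset by auto
    then show "parity_char A Q + parity_char A (insert a Q) = 0" unfolding parity_char_def by simp
  qed
  finally show ?thesis using False by simp
qed

section \<open>Worm configurations on a graph with weights in [0,1]\<close>

locale worm_graph =
  fixes Cs :: "'c set" and Es :: "'c set set" and x :: "'c set \<Rightarrow> real"
  assumes finite_Cs: "finite Cs"
    and edge_doubleton: "\<And>e. e \<in> Es \<Longrightarrow> \<exists>p q. p \<in> Cs \<and> q \<in> Cs \<and> p \<noteq> q \<and> e = {p, q}"
    and weight_nonneg: "\<And>e. e \<in> Es \<Longrightarrow> 0 \<le> x e"
    and weight_le_1: "\<And>e. e \<in> Es \<Longrightarrow> x e \<le> 1"
begin

abbreviation "\<Omega>\<^sub>0 \<equiv> Omega Cs Es 0"
abbreviation "\<Omega>\<^sub>2 \<equiv> Omega Cs Es 2"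
abbreviation "\<Omega>\<^sub>w \<equiv> Omega_worm Cs Es"

lemma finite_Es: "finite Es"
proof -
  have "Es \<subseteq> Pow Cs" using edge_doubleton by blast
  then show ?thesis using finite_Cs finite_subset by blast
qed

lemma finite_subset_Es: "S \<subseteq> Es \<Longrightarrow> finite S"
  using finite_Es finite_subset by blast

lemma odd_verts_subset: "odd_verts Cs S \<subseteq> Cs"
  unfolding odd_verts_def by auto

lemma finite_odd_verts: "finite (odd_verts Cs S)"
  using finite_subset[OF odd_verts_subset finite_Cs] .

lemma odd_verts_singleton:
  assumes "e \<in> Es"
  shows "odd_verts Cs {e} = e"
proof -
  have "card {f \<in> {e}. u \<in> f} = (if u \<in> e then 1 else 0)" for u
    by (simp add: Collect_conv_if)
  moreover have "e \<subseteq> Cs" using edge_doubleton[OF assms] by blast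
  ultimately show ?thesis unfolding odd_verts_def by auto
qed

lemma odd_verts_toggle:
  "S \<subseteq> Es \<Longrightarrow> e \<in> Es \<Longrightarrow> odd_verts Cs (toggle S e) = sym_diff (odd_verts Cs S) e"
  by (simp add: toggle_eq_sym_diff odd_verts_sym_diff finite_subset_Es odd_verts_singleton)

lemma wt_nonneg: "S \<subseteq> Es \<Longrightarrow> 0 \<le> wt x S"
  unfolding wt_def using weight_nonneg by (auto intro: prod_nonneg)

lemma Zk_nonneg: "0 \<le> Zk Cs Es x k"
  unfolding Zk_def Omega_def by (rule sum_nonneg) (use wt_nonneg in auto)

lemma Omega0_iff: "S \<in> \<Omega>\<^sub>0 \<longleftrightarrow> S \<subseteq> Es \<and> odd_verts Cs S = {}"
  unfolding Omega_def using finite_odd_verts by auto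

lemma Omega_worm_iff: "S \<in> \<Omega>\<^sub>w \<longleftrightarrow> S \<subseteq> Es \<and> (card (odd_verts Cs S) = 0 \<or> card (odd_verts Cs S) = 2)"
  unfolding Omega_worm_def Omega_def by auto

lemma Omega0_subset_Omega_worm: "\<Omega>\<^sub>0 \<subseteq> \<Omega>\<^sub>w"
  unfolding Omega_worm_def by blast

lemma finite_Omega_worm: "finite \<Omega>\<^sub>w"
proof -
  have "\<Omega>\<^sub>w \<subseteq> Pow Es" by (auto simp: Omega_worm_iff)
  then show ?thesis using finite_Es finite_subset by blast
qed

lemma empty_in_Omega0: "{} \<in> \<Omega>\<^sub>0"
  by (simp add: Omega0_iff odd_verts_def)

lemma Z0_ge_1: "1 \<le> Zk Cs Es x 0"
proof -
  have "wt x {} \<le> Zk Cs Es x 0"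
    unfolding Zk_def using empty_in_Omega0 finite_Omega_worm Omega0_subset_Omega_worm
    by (intro member_le_sum) (auto simp: Omega0_iff wt_nonneg intro: finite_subset)
  then show ?thesis by (simp add: wt_def)
qed

lemma prod_parity_char_edges:
  assumes "S \<subseteq> Es" "Q \<subseteq> Cs"
  shows "(\<Prod>e\<in>S. parity_char e Q) = parity_char (odd_verts Cs S) Q"
proof -
  have fS: "finite S" and fQ: "finite Q" using assms finite_subset_Es finite_Cs finite_subset by auto
  have "(\<Sum>e\<in>S. card (e \<inter> Q)) = (\<Sum>e\<in>S. \<Sum>u\<in>Q. if u \<in> e then 1 else 0)"
    using fQ by (intro sum.cong) (simp_all add: sum.If_cases Int_commute)
  also have "\<dots> = (\<Sum>u\<in>Q. card {e \<in> S. u \<in> e})"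
    using fS by (subst sum.swap) (simp add: sum.If_cases Int_def)
  finally have "(\<Sum>e\<in>S. card (e \<inter> Q)) = (\<Sum>u\<in>Q. card {e \<in> S. u \<in> e})" .
  moreover have "odd_verts Cs S \<inter> Q = {u \<in> Q. odd (card {e \<in> S. u \<in> e})}"
    using assms unfolding odd_verts_def by auto
  ultimately have "even (\<Sum>e\<in>S. card (e \<inter> Q)) \<longleftrightarrow> even (card (odd_verts Cs S \<inter> Q))"
    using even_sum_iff[OF fQ] by simp
  then have "(-1::real) ^ (\<Sum>e\<in>S. card (e \<inter> Q)) = (-1) ^ card (odd_verts Cs S \<inter> Q)"
    by (cases "even (card (odd_verts Cs S \<inter> Q))") auto
  then show ?thesis unfolding parity_char_def power_sum .
qed

definition parity_transform :: "'c set \<Rightarrow> real" where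
  "parity_transform Q = (\<Prod>e\<in>Es. 1 + x e * parity_char e Q)"

lemma parity_transform_nonneg: "0 \<le> parity_transform Q"
  unfolding parity_transform_def
proof (rule prod_nonneg)
  fix e assume "e \<in> Es"
  then show "0 \<le> 1 + x e * parity_char e Q"
    using weight_nonneg weight_le_1 parity_char_cases[of e Q] by auto
qed

lemma parity_transform_expand:
  assumes "Q \<subseteq> Cs"
  shows "parity_transform Q = (\<Sum>S\<in>Pow Es. wt x S * parity_char (odd_verts Cs S) Q)"
proof -
  have "parity_transform Q = (\<Sum>S\<in>Pow Es. (\<Prod>e\<in>S. x e * parity_char e Q) * (\<Prod>e\<in>Es - S. 1))"
    unfolding parity_transform_def using prod_add[OF finite_Es, of "\<lambda>e. x e * parity_char e Q" "\<lambda>_. 1"]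
    by (simp add: add.commute)
  also have "\<dots> = (\<Sum>S\<in>Pow Es. wt x S * parity_char (odd_verts Cs S) Q)"
    using assms by (intro sum.cong) (simp_all add: wt_def prod.distrib prod_parity_char_edges)
  finally show ?thesis .
qed

lemma sum_parity_char_parity_transform:
  assumes "W \<subseteq> Cs"
  shows "(\<Sum>Q\<in>Pow Cs. parity_char W Q * parity_transform Q)
       = 2 ^ card Cs * (\<Sum>S | S \<subseteq> Es \<and> odd_verts Cs S = W. wt x S)"
proof -
  have "(\<Sum>Q\<in>Pow Cs. parity_char W Q * parity_transform Q)
      = (\<Sum>Q\<in>Pow Cs. \<Sum>S\<in>Pow Es. wt x S * parity_char (sym_diff W (odd_verts Cs S)) Q)"
  proof (intro sum.cong refl)
    fix Q assume "Q \<in> Pow Cs"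
    then have "Q \<subseteq> Cs" "finite Q" using finite_Cs finite_subset by auto
    then show "parity_char W Q * parity_transform Q
        = (\<Sum>S\<in>Pow Es. wt x S * parity_char (sym_diff W (odd_verts Cs S)) Q)"
      by (simp add: parity_transform_expand sum_distrib_left parity_char_mult[symmetric] mult_ac)
  qed
  also have "\<dots> = (\<Sum>S\<in>Pow Es. wt x S * (\<Sum>Q\<in>Pow Cs. parity_char (sym_diff W (odd_verts Cs S)) Q))"
    by (subst sum.swap) (simp add: sum_distrib_left)
  also have "\<dots> = (\<Sum>S\<in>Pow Es. if odd_verts Cs S = W then 2 ^ card Cs * wt x S else 0)"
  proof (intro sum.cong refl)
    fix S
    have "sym_diff W (odd_verts Cs S) \<subseteq> Cs" using assms odd_verts_subset by blast
    moreover have "sym_diff W (odd_verts Cs S) = {} \<longleftrightarrow> odd_verts Cs S = W" by blast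
    ultimately show "wt x S * (\<Sum>Q\<in>Pow Cs. parity_char (sym_diff W (odd_verts Cs S)) Q)
        = (if odd_verts Cs S = W then 2 ^ card Cs * wt x S else 0)"
      by (simp add: sum_parity_char_Pow[OF finite_Cs])
  qed
  also have "\<dots> = 2 ^ card Cs * (\<Sum>S | S \<subseteq> Es \<and> odd_verts Cs S = W. wt x S)"
    using finite_Es by (simp add: sum.If_cases sum_distrib_left Int_def conj_commute)
  finally show ?thesis .
qed

text \<open>Fourier analysis on the group of subsets of Cs: since the weights lie in [0,1],
  the parity transform is nonnegative, so its coefficient at any W is dominated by the
  coefficient at the empty set, which is 2 ^ card Cs times Z_0.\<close>
lemma sum_wt_odd_verts_eq_le_Z0:
  "(\<Sum>S | S \<subseteq> Es \<and> odd_verts Cs S = W. wt x S) \<le> Zk Cs Es x 0"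
proof (cases "W \<subseteq> Cs")
  case True
  have "(\<Sum>Q\<in>Pow Cs. parity_char W Q * parity_transform Q) \<le> (\<Sum>Q\<in>Pow Cs. parity_char {} Q * parity_transform Q)"
  proof (rule sum_mono)
    fix Q :: "'c set"
    have "parity_char {} Q = 1" by (simp add: parity_char_def)
    then show "parity_char W Q * parity_transform Q \<le> parity_char {} Q * parity_transform Q"
      using parity_char_cases[of W Q] parity_transform_nonneg[of Q] by auto
  qed
  moreover have "\<Omega>\<^sub>0 = {S. S \<subseteq> Es \<and> odd_verts Cs S = {}}"
    using Omega0_iff by blast
  then have "Zk Cs Es x 0 = (\<Sum>S | S \<subseteq> Es \<and> odd_verts Cs S = {}. wt x S)"
    unfolding Zk_def by simp
  ultimately show ?thesis
    using sum_parity_char_parity_transform[OF True] sum_parity_char_parity_transform[of "{}"] by simp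
next
  case False
  then have "{S. S \<subseteq> Es \<and> odd_verts Cs S = W} = {}" using odd_verts_subset by blast
  then show ?thesis using Zk_nonneg by (simp only: sum.empty)
qed

lemma sum_wt_odd_verts_in_le:
  assumes "finite Ws"
  shows "(\<Sum>S | S \<subseteq> Es \<and> odd_verts Cs S \<in> Ws. wt x S) \<le> card Ws * Zk Cs Es x 0"
proof -
  have "(\<Sum>S | S \<subseteq> Es \<and> odd_verts Cs S \<in> Ws. wt x S)
      = (\<Sum>W\<in>Ws. \<Sum>S | S \<subseteq> Es \<and> odd_verts Cs S = W. wt x S)"
    using assms finite_Es by (subst sum.group[symmetric]) (auto intro: sum.cong)
  also have "\<dots> \<le> (\<Sum>W\<in>Ws. Zk Cs Es x 0)"
    by (intro sum_mono sum_wt_odd_verts_eq_le_Z0)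
  finally show ?thesis by simp
qed

section \<open>Canonical paths\<close>

lemma edge_other_end:
  assumes "e \<in> Es" "u \<in> e"
  obtains w where "w \<in> Cs" "w \<noteq> u" "e = {u, w}"
  using edge_doubleton[OF assms(1)] assms(2) by auto

lemma Omega_worm_remove_edge:
  assumes U: "U \<in> \<Omega>\<^sub>w" and "U \<noteq> {}"
  shows "\<exists>e\<in>U. U - {e} \<in> \<Omega>\<^sub>w"
proof -
  have UE: "U \<subseteq> Es" using U by (simp add: Omega_worm_iff)
  have remove: "U - {e} \<in> \<Omega>\<^sub>w \<longleftrightarrow> card (sym_diff (odd_verts Cs U) e) \<in> {0, 2}" if "e \<in> U" for e
  proof -
    have "U - {e} = toggle U e" using that by (simp add: toggle_def)
    moreover have "e \<in> Es" using UE that by blast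
    ultimately have "odd_verts Cs (U - {e}) = sym_diff (odd_verts Cs U) e"
      using odd_verts_toggle[OF UE] by simp
    moreover have "U - {e} \<subseteq> Es" using UE by blast
    ultimately show ?thesis by (simp add: Omega_worm_iff)
  qed
  show ?thesis
  proof (cases "odd_verts Cs U = {}")
    case True
    obtain e where e: "e \<in> U" using assms(2) by blast
    then obtain p q where "e = {p, q}" "p \<noteq> q" using UE edge_doubleton by blast
    then have "card (sym_diff (odd_verts Cs U) e) = 2" using True by simp
    then show ?thesis using remove[OF e] e by blast
  next
    case False
    then obtain s t where st: "odd_verts Cs U = {s, t}" "s \<noteq> t"
      using U finite_odd_verts by (auto simp: Omega_worm_iff card_2_iff)
    then have "odd (card {e \<in> U. s \<in> e})" unfolding odd_verts_def by blast
    then have "{e \<in> U. s \<in> e} \<noteq> {}" by (intro notI) simp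
    then obtain e where e: "e \<in> U" "s \<in> e" by blast
    then obtain w where "w \<noteq> s" "e = {s, w}" using UE edge_other_end by blast
    then have "sym_diff (odd_verts Cs U) e = (if w = t then {} else {t, w})" using st by auto
    then have "card (sym_diff (odd_verts Cs U) e) \<in> {0, 2}" by simp
    then show ?thesis using remove[OF e(1)] e(1) by blast
  qed
qed

definition worm_ordering :: "'c set set \<Rightarrow> 'c set list \<Rightarrow> bool" where
  "worm_ordering U l \<longleftrightarrow> distinct l \<and> set l = U \<and> (\<forall>k. set (drop k l) \<in> \<Omega>\<^sub>w)"

lemma worm_ordering_exists: "U \<in> \<Omega>\<^sub>w \<Longrightarrow> \<exists>l. worm_ordering U l"
proof (induction "card U" arbitrary: U)
  case 0
  then have "U = {}" using finite_subset_Es by (auto simp: Omega_worm_iff)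
  then show ?case using 0 by (auto simp: worm_ordering_def)
next
  case (Suc n)
  then have "U \<noteq> {}" by auto
  then obtain e where e: "e \<in> U" "U - {e} \<in> \<Omega>\<^sub>w" using Omega_worm_remove_edge Suc.prems by blast
  moreover have "finite U" using Suc.prems finite_subset_Es by (auto simp: Omega_worm_iff)
  ultimately have "n = card (U - {e})" using Suc.hyps(2) by simp
  then obtain l where l: "worm_ordering (U - {e}) l" using Suc.hyps(1) e(2) by blast
  have "set (drop k (e # l)) \<in> \<Omega>\<^sub>w" for k
    using l Suc.prems e(1) by (cases k) (auto simp: worm_ordering_def insert_absorb)
  then have "worm_ordering U (e # l)" using l e(1) by (auto simp: worm_ordering_def)
  then show ?case by blast
qed

definition canonical_order :: "'c set set \<Rightarrow> 'c set list" where
  "canonical_order U = (SOME l. worm_ordering U l)"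

definition canonical_path :: "'c set set \<Rightarrow> 'c set set \<Rightarrow> 'c set set list" where
  "canonical_path a b = map (\<lambda>k. sym_diff a (set (take k (canonical_order (sym_diff a b)))))
                            [0..<Suc (length (canonical_order (sym_diff a b)))]"

lemma odd_verts_sym_diff_Omega0:
  assumes "a \<subseteq> Es" "b \<in> \<Omega>\<^sub>0"
  shows "odd_verts Cs (sym_diff a b) = odd_verts Cs a"
  using assms by (simp add: Omega0_iff odd_verts_sym_diff finite_subset_Es)

lemma worm_ordering_canonical_order:
  assumes "a \<in> \<Omega>\<^sub>w" "b \<in> \<Omega>\<^sub>0"
  shows "worm_ordering (sym_diff a b) (canonical_order (sym_diff a b))"
proof -
  have "sym_diff a b \<in> \<Omega>\<^sub>w"
    using assms odd_verts_sym_diff_Omega0[of a b] by (auto simp: Omega_worm_iff Omega0_iff)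
  then show ?thesis unfolding canonical_order_def by (metis worm_ordering_exists someI_ex)
qed

lemma sym_diff_take_eq_sym_diff_drop:
  assumes "distinct l" "set l = sym_diff a b"
  shows "sym_diff a (set (take k l)) = sym_diff b (set (drop k l))"
proof -
  have "set (take k l) \<inter> set (drop k l) = {}" "set (take k l) \<union> set (drop k l) = sym_diff a b"
    using assms set_take_disj_set_drop_if_distinct[of l k k] by (auto simp flip: set_append)
  then show ?thesis by blast
qed

lemma transitions_iff_nth:
  "(z, z') \<in> transitions p \<longleftrightarrow> (\<exists>k. Suc k < length p \<and> z = p ! k \<and> z' = p ! Suc k)"
proof -
  have "set (zip p (tl p)) = {(p ! k, p ! Suc k) | k. Suc k < length p}"
    by (auto simp: set_zip nth_tl)
  then show ?thesis unfolding transitions_def by blast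
qed

lemma length_canonical_path:
  "length (canonical_path a b) = Suc (length (canonical_order (sym_diff a b)))"
  by (simp add: canonical_path_def del: upt_Suc)

lemma nth_canonical_path:
  "k \<le> length (canonical_order (sym_diff a b)) \<Longrightarrow>
   canonical_path a b ! k = sym_diff a (set (take k (canonical_order (sym_diff a b))))"
  by (simp add: canonical_path_def del: upt_Suc)

lemma transitions_canonical_path:
  assumes "a \<in> \<Omega>\<^sub>w" "b \<in> \<Omega>\<^sub>0"
  defines "l \<equiv> canonical_order (sym_diff a b)"
  shows "(z, z') \<in> transitions (canonical_path a b) \<longleftrightarrow>
         (\<exists>k < length l. z = sym_diff a (set (take k l)) \<and> z' = toggle z (l ! k))"
proof -
  have "distinct l" using worm_ordering_canonical_order[OF assms(1,2)] by (simp add: l_def worm_ordering_def)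
  have step: "sym_diff a (set (take (Suc k) l)) = toggle (sym_diff a (set (take k l))) (l ! k)"
    if "k < length l" for k
  proof -
    have "take (Suc k) l = take k l @ [l ! k]" using that by (simp add: take_Suc_conv_app_nth)
    moreover have "l ! k \<notin> set (take k l)"
      using \<open>distinct l\<close> calculation distinct_take[of l "Suc k"] by auto
    ultimately show ?thesis by (simp add: sym_diff_insert_toggle)
  qed
  have "(z, z') \<in> transitions (canonical_path a b) \<longleftrightarrow>
        (\<exists>k < length l. z = sym_diff a (set (take k l)) \<and> z' = sym_diff a (set (take (Suc k) l)))"
    unfolding transitions_iff_nth length_canonical_path l_def
    by (intro iff_exI) (auto simp: nth_canonical_path)
  then show ?thesis using step by auto
qed

text \<open>As b is even, the state reached after toggling the first k edges has the same odd
  vertices as the set of the remaining edges.\<close>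
lemma canonical_path_state_in_Omega_worm:
  assumes "a \<in> \<Omega>\<^sub>w" "b \<in> \<Omega>\<^sub>0"
  shows "sym_diff a (set (take k (canonical_order (sym_diff a b)))) \<in> \<Omega>\<^sub>w"
proof -
  let ?l = "canonical_order (sym_diff a b)"
  have l: "worm_ordering (sym_diff a b) ?l" by (rule worm_ordering_canonical_order[OF assms])
  then have D: "set (drop k ?l) \<in> \<Omega>\<^sub>w" and "set (drop k ?l) \<subseteq> Es"
    by (auto simp: worm_ordering_def Omega_worm_iff)
  have "sym_diff a (set (take k ?l)) = sym_diff (set (drop k ?l)) b"
    using l sym_diff_take_eq_sym_diff_drop[of ?l a b k] by (auto simp: worm_ordering_def)
  moreover have "sym_diff (set (drop k ?l)) b \<subseteq> Es"
    using \<open>set (drop k ?l) \<subseteq> Es\<close> assms(2) by (auto simp: Omega0_iff)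
  ultimately show ?thesis
    using D odd_verts_sym_diff_Omega0[OF \<open>set (drop k ?l) \<subseteq> Es\<close> assms(2)] by (simp add: Omega_worm_iff)
qed

lemma is_worm_path_canonical_path:
  assumes "a \<in> \<Omega>\<^sub>w" "b \<in> \<Omega>\<^sub>0"
  shows "is_worm_path Cs Es a b (canonical_path a b)"
proof -
  let ?p = "canonical_path a b" and ?l = "canonical_order (sym_diff a b)"
  have l: "worm_ordering (sym_diff a b) ?l" by (rule worm_ordering_canonical_order[OF assms])
  have UE: "sym_diff a b \<subseteq> Es" using assms by (auto simp: Omega_worm_iff Omega0_iff)
  have ne: "?p \<noteq> []" by (metis length_canonical_path list.size(3) nat.distinct(1))
  moreover have "hd ?p = a" using ne by (simp add: hd_conv_nth nth_canonical_path)
  moreover have "last ?p = b"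
    using ne l by (auto simp: last_conv_nth length_canonical_path nth_canonical_path worm_ordering_def)
  moreover have "set ?p \<subseteq> \<Omega>\<^sub>w"
    using canonical_path_state_in_Omega_worm[OF assms] canonical_path_state_in_Omega_worm[OF assms, of "length ?l"]
    by (auto simp: canonical_path_def)
  moreover have "\<exists>e\<in>Es. t = toggle s e" if st: "(s, t) \<in> transitions ?p" for s t
  proof -
    obtain k where k: "k < length ?l" "t = toggle s (?l ! k)"
      using st unfolding transitions_canonical_path[OF assms] by blast
    have "?l ! k \<in> sym_diff a b" using l nth_mem[OF k(1)] by (simp add: worm_ordering_def)
    then show ?thesis using k(2) UE by blast
  qed
  then have "\<forall>(s, t)\<in>set (zip ?p (tl ?p)). \<exists>e\<in>Es. t = toggle s e"
    unfolding transitions_def by blast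
  ultimately show ?thesis unfolding is_worm_path_def by blast
qed

lemma length_canonical_path_le:
  assumes "a \<in> \<Omega>\<^sub>w" "b \<in> \<Omega>\<^sub>0"
  shows "length (canonical_path a b) - 1 \<le> card Es"
proof -
  have "sym_diff a b \<subseteq> Es" using assms by (auto simp: Omega_worm_iff Omega0_iff)
  then have "card (sym_diff a b) \<le> card Es" using finite_Es by (rule card_mono[rotated])
  then show ?thesis
    using worm_ordering_canonical_order[OF assms] distinct_card
    by (fastforce simp: length_canonical_path worm_ordering_def)
qed

lemma no_loop_canonical_path:
  assumes "a \<in> \<Omega>\<^sub>w" "b \<in> \<Omega>\<^sub>0"
  shows "(z, z) \<notin> transitions (canonical_path a b)"
  using transitions_canonical_path[OF assms] toggle_neq by metis

lemma canonical_path_through_edge: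
  assumes "a \<in> \<Omega>\<^sub>w" "b \<in> \<Omega>\<^sub>0" "(z, toggle z e) \<in> transitions (canonical_path a b)"
  obtains k where "k < length (canonical_order (sym_diff a b))"
    "z = sym_diff a (set (take k (canonical_order (sym_diff a b))))"
    "canonical_order (sym_diff a b) ! k = e"
  using assms transitions_canonical_path[OF assms(1,2)] toggle_inj by metis

lemma deg_le_card: "deg Es u \<le> card Cs"
proof -
  have "{f \<in> Es. u \<in> f} \<subseteq> (\<lambda>w. {u, w}) ` Cs"
    by (auto elim: edge_other_end)
  then have "deg Es u \<le> card ((\<lambda>w. {u, w}) ` Cs)"
    unfolding deg_def using finite_Cs by (intro card_mono) auto
  also have "\<dots> \<le> card Cs" using finite_Cs by (rule card_image_le)
  finally show ?thesis .
qed

lemma deg_ge_1: "e \<in> Es \<Longrightarrow> u \<in> e \<Longrightarrow> 1 \<le> deg Es u"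
proof -
  assume "e \<in> Es" "u \<in> e"
  then have "{f \<in> Es. u \<in> f} \<noteq> {}" by blast
  then show ?thesis unfolding deg_def using finite_Es by (simp add: Suc_le_eq card_gt_0_iff)
qed

lemma card_Cs_ge_2:
  assumes "e \<in> Es"
  shows "2 \<le> card Cs"
proof -
  obtain p q where "p \<in> Cs" "q \<in> Cs" "p \<noteq> q" using edge_doubleton[OF assms] by blast
  then have "card {p, q} \<le> card Cs" using finite_Cs by (intro card_mono) auto
  then show ?thesis using \<open>p \<noteq> q\<close> by simp
qed

lemma sum_inverse_deg_ge:
  assumes "e \<in> Es"
  shows "1 / card Cs \<le> (\<Sum>u\<in>e. 1 / deg Es u)"
proof -
  obtain p q where pq: "e = {p, q}" "p \<noteq> q" using edge_doubleton[OF assms] by blast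
  have "1 \<le> real (deg Es p)" "real (deg Es p) \<le> real (card Cs)"
    using deg_ge_1[OF assms] deg_le_card pq by simp_all
  then have "1 / real (card Cs) \<le> 1 / deg Es p" by (intro divide_left_mono) auto
  moreover have "(\<Sum>u\<in>e. 1 / deg Es u) = 1 / deg Es p + 1 / deg Es q" using pq by simp
  moreover have "0 \<le> 1 / real (deg Es q)" by simp
  ultimately show ?thesis by linarith
qed

text \<open>This makes the endpoints chosen by THE in the definition of P_move well defined.\<close>
lemma worm_move_ends:
  assumes "z \<in> \<Omega>\<^sub>2" "toggle z e \<in> \<Omega>\<^sub>2" "e \<in> Es"
  obtains u w where "e = {u, w}" "u \<noteq> w" "u \<in> odd_verts Cs z" "w \<notin> odd_verts Cs z"
proof -
  have zE: "z \<subseteq> Es" using assms(1) by (simp add: Omega_def)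
  obtain p q where e: "e = {p, q}" "p \<noteq> q" using edge_doubleton[OF assms(3)] by blast
  have "card (sym_diff (odd_verts Cs z) e) + 2 * card (odd_verts Cs z \<inter> e) = card (odd_verts Cs z) + card e"
    using finite_odd_verts e by (intro card_sym_diff_add) auto
  then have "card (odd_verts Cs z \<inter> e) = 1"
    using assms e odd_verts_toggle[OF zE assms(3)] by (simp add: Omega_def)
  then obtain u where u: "odd_verts Cs z \<inter> e = {u}" by (auto simp: card_1_singleton_iff)
  then obtain w where "w \<noteq> u" "e = {u, w}" using assms(3) edge_other_end by blast
  moreover have "w \<notin> odd_verts Cs z" using u calculation by blast
  ultimately show ?thesis using that u by blast
qed

lemma Metropolis_factor_ge:
  fixes du dv n y :: real
  assumes "0 < du" "du \<le> n" "0 < dv" "dv \<le> n" "0 \<le> y" "y \<le> 1"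
  shows "y * (du / n) \<le> min 1 (du / dv * y)"
    and "du / n \<le> (if y \<le> du / dv then 1 else du / dv / y)"
proof -
  have r: "du / n \<le> du / dv" and r1: "du / n \<le> 1"
    using assms by (simp_all add: divide_left_mono)
  have "y * (du / n) \<le> y * 1" "y * (du / n) \<le> y * (du / dv)"
    using r r1 assms(5) by (simp_all only: mult_left_mono)
  moreover have "du / dv * y = y * (du / dv)" by (rule mult.commute)
  ultimately show "y * (du / n) \<le> min 1 (du / dv * y)" using assms(6) unfolding min.bounded_iff by linarith
  show "du / n \<le> (if y \<le> du / dv then 1 else du / dv / y)"
  proof (cases "y \<le> du / dv")
    case False
    moreover have "0 < du / dv" using assms(1,3) by simp
    moreover have "r \<le> r / y" if "0 < r" "r < y" for r :: real
      using that assms(6) by (simp add: le_divide_eq mult_left_le)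
    ultimately have "du / dv \<le> du / dv / y" by (meson not_le)
    then show ?thesis using False r by simp
  qed (use r1 in simp)
qed

lemma P_move_shift_lower_bound:
  assumes "z \<in> \<Omega>\<^sub>2" "toggle z e \<in> \<Omega>\<^sub>2" and e: "e \<in> Es"
  shows "(if e \<notin> z then x e else 1) \<le> 4 * card Cs * P_move Cs Es x z e"
proof -
  obtain u w where uw: "e = {u, w}" "u \<noteq> w" "u \<in> odd_verts Cs z" "w \<notin> odd_verts Cs z"
    using worm_move_ends[OF assms] by blast
  have u: "(THE u'. u' \<in> e \<and> u' \<in> odd_verts Cs z) = u" and w: "(THE v. v \<in> e \<and> v \<noteq> u) = w"
    using uw by auto
  define n du dv where "n = real (card Cs)" and "du = real (deg Es u)" and "dv = real (deg Es w)"
  define M where "M = (if e \<notin> z then min 1 (du / dv * x e) else (if x e \<le> du / dv then 1 else du / dv / x e))"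
  have "z \<notin> \<Omega>\<^sub>0" "toggle z e \<notin> \<Omega>\<^sub>0" using assms(1,2) by (auto simp: Omega_def)
  then have P: "P_move Cs Es x z e = M * (1 / (4 * du))"
    using assms(1,2) unfolding P_move_def Let_def by (simp add: u w du_def dv_def M_def)
  have d: "1 \<le> du" "du \<le> n" "1 \<le> dv" "dv \<le> n"
    using deg_ge_1[OF e] deg_le_card uw by (simp_all add: du_def dv_def n_def)
  then have "(if e \<notin> z then x e else 1) * (du / n) \<le> M"
    using Metropolis_factor_ge[of du n dv "x e"] weight_nonneg[OF e] weight_le_1[OF e] by (simp add: M_def)
  then show ?thesis using d by (simp add: P n_def field_simps)
qed

lemma P_move_lower_bound:
  assumes z: "z \<in> \<Omega>\<^sub>w" and e: "e \<in> Es" and t: "toggle z e \<in> \<Omega>\<^sub>w"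
  shows "(if e \<notin> z then x e else 1) \<le> 2 * card Cs * (xi Cs Es z * P_move Cs Es x z e)"
proof -
  consider "z \<in> \<Omega>\<^sub>0 \<or> toggle z e \<in> \<Omega>\<^sub>0" | "z \<in> \<Omega>\<^sub>2" "toggle z e \<in> \<Omega>\<^sub>2" "z \<notin> \<Omega>\<^sub>0"
    using z t unfolding Omega_worm_def by (auto simp: Omega_def)
  then show ?thesis
  proof cases
    case 1
    define n ex s where "n = real (card Cs)" and "ex = (if e \<notin> z then x e else 1)"
      and "s = (\<Sum>u\<in>e. 1 / real (deg Es u))"
    have n: "2 \<le> n" using card_Cs_ge_2[OF e] n_def by simp
    have "xi Cs Es z * P_move Cs Es x z e = ex * s / 2"
      using 1 z n by (auto simp: xi_def P_move_def ex_def s_def n_def Omega_worm_def)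
    then have "2 * n * (xi Cs Es z * P_move Cs Es x z e) = n * ex * s" by simp
    moreover have "ex \<le> n * ex * s"
      using mult_left_mono[OF sum_inverse_deg_ge[OF e], of ex] weight_nonneg[OF e] n
      by (simp add: ex_def s_def n_def field_simps)
    ultimately show ?thesis by (simp only: ex_def n_def)
  next
    case 2
    then show ?thesis using P_move_shift_lower_bound[OF 2(1,2) e] by (simp add: xi_def)
  qed
qed

section \<open>Congestion of the canonical paths\<close>

definition pairs_through :: "'c set set \<Rightarrow> 'c set \<Rightarrow> ('c set set \<times> 'c set set) set" where
  "pairs_through z e = {(a, b). a \<in> \<Omega>\<^sub>w \<and> b \<in> \<Omega>\<^sub>0 \<and> (z, toggle z e) \<in> transitions (canonical_path a b)}"

lemma pairs_through_agree:
  assumes "(a, b) \<in> pairs_through z e"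
  shows "e \<in> sym_diff a b" "f \<notin> sym_diff a b \<Longrightarrow> f \<in> insert e z \<longleftrightarrow> f \<in> a"
proof -
  let ?l = "canonical_order (sym_diff a b)"
  have ab: "a \<in> \<Omega>\<^sub>w" "b \<in> \<Omega>\<^sub>0"
    and "(z, toggle z e) \<in> transitions (canonical_path a b)" using assms by (auto simp: pairs_through_def)
  then obtain k where k: "k < length ?l" "z = sym_diff a (set (take k ?l))" "?l ! k = e"
    by (rule canonical_path_through_edge)
  have l: "set ?l = sym_diff a b" using worm_ordering_canonical_order[OF ab] by (simp add: worm_ordering_def)
  then show "e \<in> sym_diff a b" using nth_mem[OF k(1)] k(3) by simp
  assume "f \<notin> sym_diff a b"
  then have "f \<notin> set (take k ?l)" "f \<noteq> e"
    using l set_take_subset[of k ?l] \<open>e \<in> sym_diff a b\<close> by auto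
  then show "f \<in> insert e z \<longleftrightarrow> f \<in> a" using k(2) by simp
qed

lemma wt_pairs_through:
  assumes "(a, b) \<in> pairs_through z e" "z \<subseteq> Es" "e \<in> Es"
  shows "wt x a * wt x b = (if e \<notin> z then x e else 1) * wt x z * wt x (sym_diff (sym_diff a b) (insert e z))"
proof -
  have "a \<subseteq> Es" "b \<subseteq> Es"
    using assms(1) by (auto simp: pairs_through_def Omega_worm_iff Omega0_iff)
  then have "wt x a * wt x b = wt x (insert e z) * wt x (sym_diff (sym_diff a b) (insert e z))"
    using assms pairs_through_agree(2)[OF assms(1)] by (intro wt_mult_exchange) (auto simp: finite_subset_Es)
  moreover have "wt x (insert e z) = (if e \<notin> z then x e else 1) * wt x z"
    using finite_subset_Es[OF assms(2)] by (simp add: wt_def insert_absorb)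
  ultimately show ?thesis by simp
qed

lemma inj_on_pairs_through:
  "inj_on (\<lambda>(a, b). sym_diff (sym_diff a b) (insert e z)) (pairs_through z e)"
proof (rule inj_onI, clarsimp)
  fix a1 b1 a2 b2
  assume p1: "(a1, b1) \<in> pairs_through z e" and p2: "(a2, b2) \<in> pairs_through z e"
    and eq: "sym_diff (sym_diff a1 b1) (insert e z) = sym_diff (sym_diff a2 b2) (insert e z)"
  have U: "sym_diff a1 b1 = sym_diff a2 b2" using eq by blast
  let ?l = "canonical_order (sym_diff a1 b1)"
  have ab1: "a1 \<in> \<Omega>\<^sub>w" "b1 \<in> \<Omega>\<^sub>0" and ab2: "a2 \<in> \<Omega>\<^sub>w" "b2 \<in> \<Omega>\<^sub>0"
    using p1 p2 by (auto simp: pairs_through_def)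
  obtain k1 where k1: "k1 < length ?l" "z = sym_diff a1 (set (take k1 ?l))" "?l ! k1 = e"
    using p1 by (auto simp: pairs_through_def elim: canonical_path_through_edge[OF ab1])
  obtain k2 where k2: "k2 < length ?l" "z = sym_diff a2 (set (take k2 ?l))" "?l ! k2 = e"
    using p2 unfolding U by (auto simp: pairs_through_def elim: canonical_path_through_edge[OF ab2])
  have "distinct ?l" using worm_ordering_canonical_order[OF ab1] by (simp add: worm_ordering_def)
  then have "k1 = k2" using nth_eq_iff_index_eq[OF _ k1(1) k2(1)] k1(3) k2(3) by simp
  then have "a1 = a2" using k1(2) k2(2) by blast
  then show "a1 = a2 \<and> b1 = b2" using U by blast
qed

lemma odd_verts_pairs_through_exchange:
  assumes "(a, b) \<in> pairs_through z e" "insert e z \<subseteq> Es"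
  shows "sym_diff (sym_diff a b) (insert e z) \<subseteq> Es"
    and "odd_verts Cs (sym_diff (sym_diff a b) (insert e z)) = sym_diff (odd_verts Cs a) (odd_verts Cs (insert e z))"
proof -
  have ab: "a \<subseteq> Es" "b \<in> \<Omega>\<^sub>0" using assms(1) by (auto simp: pairs_through_def Omega_worm_iff)
  then have "sym_diff a b \<subseteq> Es" by (auto simp: Omega0_iff)
  then show "sym_diff (sym_diff a b) (insert e z) \<subseteq> Es" using assms(2) by blast
  show "odd_verts Cs (sym_diff (sym_diff a b) (insert e z)) = sym_diff (odd_verts Cs a) (odd_verts Cs (insert e z))"
    using \<open>sym_diff a b \<subseteq> Es\<close> assms(2) ab
    by (simp add: finite_subset_Es odd_verts_sym_diff odd_verts_sym_diff_Omega0)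
qed

lemma sum_wt_pairs_through_exchange_le:
  assumes "z \<in> \<Omega>\<^sub>w" "e \<in> Es"
  shows "(\<Sum>S\<in>(\<lambda>(a, b). sym_diff (sym_diff a b) (insert e z)) ` pairs_through z e. wt x S)
       \<le> card Cs ^ 2 * Zk Cs Es x 0"
proof -
  define Ws where "Ws = (\<lambda>P. sym_diff P (odd_verts Cs (insert e z))) ` {P. P \<subseteq> Cs \<and> (card P = 0 \<or> card P = 2)}"
  have "insert e z \<subseteq> Es" using assms by (auto simp: Omega_worm_iff)
  then have "(\<lambda>(a, b). sym_diff (sym_diff a b) (insert e z)) ` pairs_through z e
      \<subseteq> {S. S \<subseteq> Es \<and> odd_verts Cs S \<in> Ws}"
  proof clarify
    fix a b assume p: "(a, b) \<in> pairs_through z e"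
    then have "card (odd_verts Cs a) = 0 \<or> card (odd_verts Cs a) = 2"
      by (simp add: pairs_through_def Omega_worm_iff)
    then show "sym_diff (sym_diff a b) (insert e z) \<subseteq> Es \<and> odd_verts Cs (sym_diff (sym_diff a b) (insert e z)) \<in> Ws"
      unfolding Ws_def odd_verts_pairs_through_exchange(2)[OF p \<open>insert e z \<subseteq> Es\<close>]
      using odd_verts_pairs_through_exchange(1)[OF p \<open>insert e z \<subseteq> Es\<close>] odd_verts_subset[of a]
      by (intro conjI image_eqI[where x = "odd_verts Cs a"] CollectI) simp_all
  qed
  then have "(\<Sum>S\<in>(\<lambda>(a, b). sym_diff (sym_diff a b) (insert e z)) ` pairs_through z e. wt x S)
      \<le> (\<Sum>S | S \<subseteq> Es \<and> odd_verts Cs S \<in> Ws. wt x S)"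
    using finite_Es by (intro sum_mono2) (auto simp: wt_nonneg intro: finite_subset[of _ "Pow Es"])
  also have "\<dots> \<le> card Ws * Zk Cs Es x 0"
    unfolding Ws_def using finite_Cs by (intro sum_wt_odd_verts_in_le) simp
  also have "\<dots> \<le> card Cs ^ 2 * Zk Cs Es x 0"
  proof (rule mult_right_mono)
    have "card Ws \<le> card {P. P \<subseteq> Cs \<and> (card P = 0 \<or> card P = 2)}"
      unfolding Ws_def using finite_Cs by (intro card_image_le) simp
    also have "\<dots> \<le> card Cs ^ 2"
      using card_subsets_card_0_or_2_le[OF finite_Cs] card_Cs_ge_2[OF assms(2)]
      by (fastforce simp: power2_eq_square)
    finally show "real (card Ws) \<le> real (card Cs ^ 2)" by linarith
  qed (rule Zk_nonneg)
  finally show ?thesis by simp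
qed

lemma sum_wt_pairs_through_le:
  assumes "z \<in> \<Omega>\<^sub>w" "e \<in> Es"
  shows "(\<Sum>(a, b)\<in>pairs_through z e. wt x a * wt x b)
       \<le> card Cs ^ 2 * ((if e \<notin> z then x e else 1) * wt x z * Zk Cs Es x 0)"
proof -
  have zE: "z \<subseteq> Es" using assms(1) by (simp add: Omega_worm_iff)
  have "(\<Sum>(a, b)\<in>pairs_through z e. wt x a * wt x b) = (if e \<notin> z then x e else 1) * wt x z *
      (\<Sum>S\<in>(\<lambda>(a, b). sym_diff (sym_diff a b) (insert e z)) ` pairs_through z e. wt x S)"
    using wt_pairs_through[OF _ zE assms(2)] inj_on_pairs_through
    by (simp add: sum.reindex sum_distrib_left case_prod_unfold)
  also have "\<dots> \<le> (if e \<notin> z then x e else 1) * wt x z * (card Cs ^ 2 * Zk Cs Es x 0)"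
    using weight_nonneg[OF assms(2)] wt_nonneg[OF zE] sum_wt_pairs_through_exchange_le[OF assms]
    by (intro mult_left_mono) simp_all
  finally show ?thesis by (simp only: mult_ac)
qed

lemma P_worm_toggle:
  assumes "e \<in> Es"
  shows "P_worm Cs Es x z (toggle z e) = P_move Cs Es x z e"
proof -
  have "(THE f. f \<in> Es \<and> toggle z e = toggle z f) = e"
    by (rule the_equality) (use assms toggle_inj in auto)
  then show ?thesis using assms toggle_neq[of z e] by (auto simp: P_worm_def P_off_def)
qed

lemma P_worm_pos_imp_toggle:
  assumes "z \<noteq> z'" "0 < P_worm Cs Es x z z'"
  obtains e where "e \<in> Es" "z' = toggle z e"
proof -
  have "0 < P_off Cs Es x z z'" using assms by (simp add: P_worm_def)
  moreover have "P_off Cs Es x z z' = 0" if "\<not> (\<exists>e\<in>Es. z' = toggle z e)"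
    using that by (simp add: P_off_def)
  ultimately have "\<exists>e\<in>Es. z' = toggle z e" by fastforce
  then show ?thesis using that by blast
qed

lemma exists_positive_transition: "\<exists>z z'. z \<in> \<Omega>\<^sub>w \<and> z' \<in> \<Omega>\<^sub>w \<and> 0 < P_worm Cs Es x z z'"
proof (cases "Es = {}")
  case True
  have "\<Omega>\<^sub>w \<subseteq> Pow Es" by (auto simp: Omega_worm_iff)
  then have "\<Omega>\<^sub>w = {{}}" using True empty_in_Omega0 Omega0_subset_Omega_worm by auto
  then have "P_worm Cs Es x {} {} = 1" by (simp add: P_worm_def)
  then show ?thesis using \<open>\<Omega>\<^sub>w = {{}}\<close> by auto
next
  case False
  then obtain e where e: "e \<in> Es" by blast
  then have "card e = 2" using edge_doubleton by fastforce
  then have "card (odd_verts Cs {e}) = 2" by (simp add: odd_verts_singleton[OF e])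
  then have "{e} \<in> \<Omega>\<^sub>w" "{e} \<notin> \<Omega>\<^sub>0" using e by (auto simp: Omega_worm_iff Omega_def)
  moreover have "toggle {e} e = {}" by (simp add: toggle_def)
  moreover have "0 < 1 / real (card Cs)" using card_Cs_ge_2[OF e] by simp
  then have "0 < (\<Sum>u\<in>e. 1 / real (deg Es u))" using sum_inverse_deg_ge[OF e] by linarith
  ultimately have "0 < P_worm Cs Es x {e} {}"
    using P_worm_toggle[OF e, of "{e}"] empty_in_Omega0 by (simp add: P_move_def)
  then show ?thesis using \<open>{e} \<in> \<Omega>\<^sub>w\<close> empty_in_Omega0 Omega0_subset_Omega_worm by blast
qed

abbreviation Z_worm :: real where
  "Z_worm \<equiv> real (card Cs) * Zk Cs Es x 0 + 2 * Zk Cs Es x 2"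

lemma Z_worm_pos:
  assumes "e \<in> Es"
  shows "0 < Z_worm"
proof -
  have "0 < real (card Cs) * Zk Cs Es x 0" using card_Cs_ge_2[OF assms] Z0_ge_1 by simp
  then show ?thesis using Zk_nonneg[of 2] by linarith
qed

lemma pi_set_Omega0: "pi_set Cs Es x \<Omega>\<^sub>0 = card Cs * Zk Cs Es x 0 / Z_worm"
  unfolding pi_set_def pi_worm_def Zk_def by (simp add: xi_def sum_divide_distrib sum_distrib_left)

lemma flow_through_le:
  assumes z: "z \<in> \<Omega>\<^sub>w" and e: "e \<in> Es" and "toggle z e \<in> \<Omega>\<^sub>w"
  shows "(\<Sum>(a, b)\<in>pairs_through z e. pi_worm Cs Es x a * pi_worm Cs Es x b)
       \<le> 2 * card Cs ^ 4 * (pi_set Cs Es x \<Omega>\<^sub>0 * pi_worm Cs Es x z * P_move Cs Es x z e)"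
proof -
  define n where "n = real (card Cs)"
  define ex where "ex = (if e \<notin> z then x e else 1)"
  have n: "2 \<le> n" using card_Cs_ge_2[OF e] by (simp add: n_def)
  have zE: "z \<subseteq> Es" using z by (simp add: Omega_worm_iff)
  have "(\<Sum>(a, b)\<in>pairs_through z e. pi_worm Cs Es x a * pi_worm Cs Es x b)
      \<le> (\<Sum>(a, b)\<in>pairs_through z e. n * n / Z_worm\<^sup>2 * (wt x a * wt x b))"
  proof (rule sum_mono, clarify)
    fix a b assume "(a, b) \<in> pairs_through z e"
    then have ab: "a \<in> \<Omega>\<^sub>w" "b \<in> \<Omega>\<^sub>0" by (auto simp: pairs_through_def)
    then have "xi Cs Es a \<le> n" "xi Cs Es b = n"
      using n by (auto simp: xi_def n_def Omega_worm_def)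
    then have "xi Cs Es a * xi Cs Es b \<le> n * n" using n by (simp add: mult_right_mono)
    moreover have "0 \<le> wt x a * wt x b"
      using ab by (simp add: wt_nonneg Omega_worm_iff Omega0_iff)
    ultimately have "xi Cs Es a * xi Cs Es b / Z_worm\<^sup>2 * (wt x a * wt x b) \<le> n * n / Z_worm\<^sup>2 * (wt x a * wt x b)"
      by (intro mult_right_mono divide_right_mono) simp_all
    then show "pi_worm Cs Es x a * pi_worm Cs Es x b \<le> n * n / Z_worm\<^sup>2 * (wt x a * wt x b)"
      by (simp add: pi_worm_def power2_eq_square mult_ac)
  qed
  also have "\<dots> = n * n / Z_worm\<^sup>2 * (\<Sum>(a, b)\<in>pairs_through z e. wt x a * wt x b)"
    by (simp add: sum_distrib_left case_prod_unfold)
  also have "\<dots> \<le> n * n / Z_worm\<^sup>2 * (n ^ 2 * (ex * wt x z * Zk Cs Es x 0))"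
    using sum_wt_pairs_through_le[OF z e] by (intro mult_left_mono) (simp_all add: n_def ex_def)
  also have "\<dots> \<le> n * n / Z_worm\<^sup>2 * (n ^ 2 * (2 * n * (xi Cs Es z * P_move Cs Es x z e) * wt x z * Zk Cs Es x 0))"
    using P_move_lower_bound[OF assms] wt_nonneg[OF zE] Zk_nonneg[of 0] n
    by (intro mult_left_mono mult_right_mono) (simp_all add: n_def ex_def)
  also have "\<dots> = 2 * n ^ 4 * (pi_set Cs Es x \<Omega>\<^sub>0 * pi_worm Cs Es x z * P_move Cs Es x z e)"
    by (simp add: pi_set_Omega0 pi_worm_def n_def power2_eq_square power4_eq_xxxx field_simps)
  finally show ?thesis by (simp add: n_def)
qed

lemma divide_mult_le_of_le_mult:
  fixes L D S c :: real
  assumes "0 \<le> L" "0 \<le> D" "0 \<le> c" "S \<le> c * D"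
  shows "L / D * S \<le> L * c"
proof (cases "D = 0")
  case False
  then have "S / D \<le> c" using assms by (simp add: divide_le_eq mult.commute)
  then show ?thesis using assms(1) by (simp add: mult_left_mono times_divide_eq_right[symmetric] del: times_divide_eq_right)
qed (use assms in simp)

lemma congestion_term_le:
  fixes L :: real
  assumes "z \<in> \<Omega>\<^sub>w" "z' \<in> \<Omega>\<^sub>w" "0 < P_worm Cs Es x z z'" "0 \<le> L" "L \<le> card Es"
  shows "L / (pi_set Cs Es x \<Omega>\<^sub>0 * pi_worm Cs Es x z * P_worm Cs Es x z z') *
           (\<Sum>(a, b)\<in>{(a, b). a \<in> \<Omega>\<^sub>w \<and> b \<in> \<Omega>\<^sub>0 \<and> (z, z') \<in> transitions (canonical_path a b)}.
              pi_worm Cs Es x a * pi_worm Cs Es x b)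
         \<le> real (card Cs) ^ 5 * real (card Es)"
proof (cases "z = z'")
  case True
  then have no_pairs: "{(a, b). a \<in> \<Omega>\<^sub>w \<and> b \<in> \<Omega>\<^sub>0 \<and> (z, z') \<in> transitions (canonical_path a b)} = {}"
    using no_loop_canonical_path by blast
  show ?thesis unfolding no_pairs by simp
next
  case False
  then obtain e where e: "e \<in> Es" "z' = toggle z e" using assms(3) by (rule P_worm_pos_imp_toggle)
  have "0 \<le> pi_set Cs Es x \<Omega>\<^sub>0 * pi_worm Cs Es x z * P_worm Cs Es x z z'"
    using assms Z_worm_pos Zk_nonneg[of 0] wt_nonneg
    by (auto simp: pi_set_Omega0 pi_worm_def xi_def Omega_worm_iff intro!: mult_nonneg_nonneg)
  then have "L / (pi_set Cs Es x \<Omega>\<^sub>0 * pi_worm Cs Es x z * P_worm Cs Es x z z') *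
        (\<Sum>(a, b)\<in>pairs_through z e. pi_worm Cs Es x a * pi_worm Cs Es x b) \<le> L * (2 * card Cs ^ 4)"
    using flow_through_le[OF assms(1) e(1)] assms(2,4) e by (intro divide_mult_le_of_le_mult) (simp_all add: P_worm_toggle)
  also have "\<dots> \<le> real (card Es) * (real (card Cs) * real (card Cs) ^ 4)"
    using assms(5) card_Cs_ge_2[OF e(1)] by (intro mult_mono mult_right_mono) simp_all
  also have "\<dots> = real (card Cs) ^ 5 * real (card Es)"
    by (simp add: eval_nat_numeral)
  finally show ?thesis using e by (simp add: pairs_through_def)
qed

theorem congestion_canonical_path_le:
  "congestion Cs Es x \<Omega>\<^sub>0 canonical_path \<le> real (card Cs) ^ 5 * real (card Es)"
proof -
  define lengths where "lengths = {length (canonical_path a b) - 1 | a b. a \<in> \<Omega>\<^sub>w \<and> b \<in> \<Omega>\<^sub>0}"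
  have "lengths = (\<lambda>(a, b). length (canonical_path a b) - 1) ` (\<Omega>\<^sub>w \<times> \<Omega>\<^sub>0)"
    unfolding lengths_def by auto
  then have "finite lengths" "lengths \<noteq> {}"
    using finite_Omega_worm finite_subset[OF Omega0_subset_Omega_worm finite_Omega_worm]
      Omega0_subset_Omega_worm empty_in_Omega0 by auto
  then have L: "real (Max lengths) \<le> card Es"
    using length_canonical_path_le by (auto simp: lengths_def)
  have "finite {(z, z'). z \<in> \<Omega>\<^sub>w \<and> z' \<in> \<Omega>\<^sub>w \<and> 0 < P_worm Cs Es x z z'}"
    using finite_Omega_worm by (auto intro: finite_subset[of _ "\<Omega>\<^sub>w \<times> \<Omega>\<^sub>w"])
  then show ?thesis
    unfolding congestion_def Let_def lengths_def[symmetric]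
    using exists_positive_transition congestion_term_le[OF _ _ _ _ L]
    by (intro Max.boundedI) auto
qed

end

section \<open>The circuit graph\<close>

lemma finite_circuits: "finite V \<Longrightarrow> finite (circuits V opp)"
proof -
  assume "finite V"
  moreover have "circuits V opp = (\<lambda>h. (circ_step V opp)\<^sup>* `` {h}) ` HE V"
    unfolding circuits_def by blast
  ultimately show ?thesis by (simp add: HE_def)
qed

lemma circuit_subset_HE:
  assumes "labelled_4reg V opp" "C \<in> circuits V opp"
  shows "C \<subseteq> HE V"
proof
  obtain h0 where h0: "h0 \<in> HE V" "C = (circ_step V opp)\<^sup>* `` {h0}"
    using assms(2) unfolding circuits_def by blast
  fix h assume "h \<in> C"
  then have "(h0, h) \<in> (circ_step V opp)\<^sup>*" using h0 by simp
  then show "h \<in> HE V"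
  proof (induction rule: rtrancl_induct)
    case (step h h')
    then show ?case
      using assms(1) by (auto simp: circ_step_def labelled_4reg_def HE_def partner_def)
  qed (rule h0(1))
qed

lemma valid_sigma_partner:
  assumes "valid_sigma V opp \<beta> \<sigma>" "h \<in> HE V"
  shows "\<sigma> (partner h) = (\<not> \<sigma> h)"
proof -
  obtain v k where h: "h = (v, k)" "v \<in> V" "k \<in> {1..4}" using assms(2) by (auto simp: HE_def)
  have "fstar \<beta> (\<sigma> (v,1)) (\<sigma> (v,2)) (\<sigma> (v,3)) (\<sigma> (v,4)) \<noteq> 0"
    using assms(1) h(2) by (simp add: valid_sigma_def vweight_def)
  then have "\<sigma> (v,1) \<noteq> \<sigma> (v,4)" "\<sigma> (v,2) \<noteq> \<sigma> (v,3)"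
    unfolding fstar_def by (auto split: if_splits)
  moreover have "k = 1 \<or> k = 2 \<or> k = 3 \<or> k = 4" using h(3) by auto
  ultimately show ?thesis using h(1) by (auto simp: partner_def)
qed

lemma valid_sigma_rereference:
  assumes "valid_sigma V opp \<beta> \<sigma>" "h \<in> HE V" "h' \<in> {opp h, partner h}"
  shows "\<sigma> h' = (\<not> \<sigma> h)"
  using assms valid_sigma_partner[OF assms(1,2)] by (auto simp: valid_sigma_def)

context
  fixes V :: "'v set" and opp and \<beta> and h h' :: "('v \<times> nat) set \<Rightarrow> 'v \<times> nat" and X
  assumes flip: "\<And>\<sigma> C. valid_sigma V opp \<beta> \<sigma> \<Longrightarrow> C \<in> circuits V opp \<Longrightarrow> \<sigma> (h' C) = (\<sigma> (h C) \<noteq> X C)"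
begin

lemma agree_vertex_rereference:
  assumes "C \<in> circuits V opp" "D \<in> circuits V opp"
  shows "agree_vertex V opp \<beta> h' v C D =
           (if X C = X D then agree_vertex V opp \<beta> h v C D else disagree_vertex V opp \<beta> h v C D)"
    and "disagree_vertex V opp \<beta> h' v C D =
           (if X C = X D then disagree_vertex V opp \<beta> h v C D else agree_vertex V opp \<beta> h v C D)"
  using flip[OF _ assms(1)] flip[OF _ assms(2)] by (auto simp: agree_vertex_def disagree_vertex_def)

lemma counts_rereference:
  assumes "{C, D} \<in> EC V opp"
  shows "A_cnt V opp \<beta> h' {C, D} = (if X C = X D then A_cnt V opp \<beta> h {C, D} else D_cnt V opp \<beta> h {C, D})"
    and "D_cnt V opp \<beta> h' {C, D} = (if X C = X D then D_cnt V opp \<beta> h {C, D} else A_cnt V opp \<beta> h {C, D})"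
proof -
  have "C \<in> circuits V opp" "D \<in> circuits V opp"
    using assms unfolding EC_def by (auto simp: doubleton_eq_iff)
  then have CD: "C' \<in> circuits V opp \<and> D' \<in> circuits V opp \<and> (X C' = X D' \<longleftrightarrow> X C = X D)"
    if "{C, D} = {C', D'}" for C' D'
    using that by (auto simp: doubleton_eq_iff)
  define cnt where "cnt P = card {v \<in> V. \<exists>C' D'. {C, D} = {C', D'} \<and> C' \<noteq> D' \<and>
                                    (v, 1) \<in> C' \<and> (v, 2) \<in> D' \<and> P v C' D'}" for P
  have cnt_cong: "cnt P = cnt Q" if "\<And>v C' D'. {C, D} = {C', D'} \<Longrightarrow> P v C' D' = Q v C' D'" for P Q
    unfolding cnt_def by (intro arg_cong[where f = card] Collect_cong ex_cong1 conj_cong refl) (rule that)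
  have "A_cnt V opp \<beta> h'' {C, D} = cnt (agree_vertex V opp \<beta> h'')"
    and "D_cnt V opp \<beta> h'' {C, D} = cnt (disagree_vertex V opp \<beta> h'')" for h''
    by (simp_all add: A_cnt_def D_cnt_def cnt_def)
  moreover have "cnt (agree_vertex V opp \<beta> h') =
      (if X C = X D then cnt (agree_vertex V opp \<beta> h) else cnt (disagree_vertex V opp \<beta> h))"
    and "cnt (disagree_vertex V opp \<beta> h') =
      (if X C = X D then cnt (disagree_vertex V opp \<beta> h) else cnt (agree_vertex V opp \<beta> h))"
  proof -
    have "agree_vertex V opp \<beta> h' v C' D' =
            (if X C = X D then agree_vertex V opp \<beta> h v C' D' else disagree_vertex V opp \<beta> h v C' D')"
      "disagree_vertex V opp \<beta> h' v C' D' =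
            (if X C = X D then disagree_vertex V opp \<beta> h v C' D' else agree_vertex V opp \<beta> h v C' D')"
      if "{C, D} = {C', D'}" for v C' D'
      using CD[OF that] agree_vertex_rereference[of C' D' v] by simp_all
    then show "cnt (agree_vertex V opp \<beta> h') =
        (if X C = X D then cnt (agree_vertex V opp \<beta> h) else cnt (disagree_vertex V opp \<beta> h))"
      and "cnt (disagree_vertex V opp \<beta> h') =
        (if X C = X D then cnt (disagree_vertex V opp \<beta> h) else cnt (agree_vertex V opp \<beta> h))"
      by (cases "X C = X D"; simp; intro cnt_cong; simp)+
  qed
  ultimately show "A_cnt V opp \<beta> h' {C, D} = (if X C = X D then A_cnt V opp \<beta> h {C, D} else D_cnt V opp \<beta> h {C, D})"
    and "D_cnt V opp \<beta> h' {C, D} = (if X C = X D then D_cnt V opp \<beta> h {C, D} else A_cnt V opp \<beta> h {C, D})"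
    by simp_all
qed

lemma D_cnt_le_A_cnt_rereference:
  assumes "e \<in> EC V opp"
    and "\<forall>C D. e = {C, D} \<longrightarrow> ((X C \<noteq> X D) \<longleftrightarrow> A_cnt V opp \<beta> h e < D_cnt V opp \<beta> h e)"
  shows "D_cnt V opp \<beta> h' e \<le> A_cnt V opp \<beta> h' e"
proof -
  obtain C D where e: "e = {C, D}" using assms(1) unfolding EC_def by blast
  then have "X C \<noteq> X D \<longleftrightarrow> A_cnt V opp \<beta> h e < D_cnt V opp \<beta> h e" using assms(2) by blast
  then show ?thesis using counts_rereference[of C D] assms(1) e by (cases "X C = X D") auto
qed

end

lemma xw_nonneg_le_1:
  assumes "1 \<le> \<beta>" "D_cnt V opp \<beta> h e \<le> A_cnt V opp \<beta> h e"
  shows "0 \<le> xw V opp \<beta> h e" "xw V opp \<beta> h e \<le> 1"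
proof -
  define k where "k = A_cnt V opp \<beta> h e - D_cnt V opp \<beta> h e"
  have "\<beta> powi (int (A_cnt V opp \<beta> h e) - int (D_cnt V opp \<beta> h e)) = \<beta> ^ k"
    using assms(2) by (simp add: k_def power_int_def nat_diff_distrib)
  moreover have "1 \<le> \<beta> ^ k" using assms(1) by (rule one_le_power)
  ultimately show "0 \<le> xw V opp \<beta> h e" "xw V opp \<beta> h e \<le> 1"
    by (simp_all add: xw_def Let_def)
qed

lemma valid_sigma_rereferenced:
  assumes "labelled_4reg V opp" "\<forall>C\<in>circuits V opp. h C \<in> C"
    and "\<forall>C\<in>circuits V opp. (\<not> X C \<longrightarrow> h' C = h C) \<and> (X C \<longrightarrow> h' C \<in> {opp (h C), partner (h C)})"
    and "valid_sigma V opp \<beta> \<sigma>" "C \<in> circuits V opp"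
  shows "\<sigma> (h' C) = (\<sigma> (h C) \<noteq> X C)"
proof (cases "X C")
  case True
  have "h C \<in> HE V" using assms(2,5) circuit_subset_HE[OF assms(1,5)] by blast
  moreover have "h' C \<in> {opp (h C), partner (h C)}" using True assms(3,5) by blast
  ultimately show ?thesis using valid_sigma_rereference[OF assms(4)] True by simp
qed (use assms(3,5) in simp)

lemma worm_graph_circuit_graph:
  assumes "1 \<le> \<beta>" "labelled_4reg V opp" "\<forall>C\<in>circuits V opp. h C \<in> C"
    and "\<forall>e\<in>EC V opp. \<forall>C D. e = {C, D} \<longrightarrow> ((X C \<noteq> X D) \<longleftrightarrow> A_cnt V opp \<beta> h e < D_cnt V opp \<beta> h e)"
    and "\<forall>C\<in>circuits V opp. (\<not> X C \<longrightarrow> h' C = h C) \<and> (X C \<longrightarrow> h' C \<in> {opp (h C), partner (h C)})"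
  shows "worm_graph (circuits V opp) (EC V opp) (xw V opp \<beta> h')"
proof
  show "finite (circuits V opp)" using assms(2) by (simp add: labelled_4reg_def finite_circuits)
next
  fix e assume e: "e \<in> EC V opp"
  then show "\<exists>p q. p \<in> circuits V opp \<and> q \<in> circuits V opp \<and> p \<noteq> q \<and> e = {p, q}"
    by (auto simp: EC_def)
  have "D_cnt V opp \<beta> h' e \<le> A_cnt V opp \<beta> h' e"
    using e assms(4) valid_sigma_rereferenced[OF assms(2,3,5)]
    by (intro D_cnt_le_A_cnt_rereference[where h = h and h' = h' and X = X]) simp_all
  then show "0 \<le> xw V opp \<beta> h' e" "xw V opp \<beta> h' e \<le> 1"
    using assms(1) xw_nonneg_le_1[of \<beta> V opp h' e] by simp_all
qed

theorem lemma6: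
  fixes V :: "'v set" and opp :: "'v \<times> nat \<Rightarrow> 'v \<times> nat" and \<beta> :: real
    and h h' :: "('v \<times> nat) set \<Rightarrow> 'v \<times> nat" and X :: "('v \<times> nat) set \<Rightarrow> bool"
  assumes "\<beta> > 1"
    and "labelled_4reg V opp"
    and "\<forall>C\<in>circuits V opp. h C \<in> C"
    and "\<forall>e\<in>EC V opp. \<forall>C D. e = {C, D} \<longrightarrow>
           ((X C \<noteq> X D) \<longleftrightarrow> A_cnt V opp \<beta> h e < D_cnt V opp \<beta> h e)"
    and "\<forall>C\<in>circuits V opp. (\<not> X C \<longrightarrow> h' C = h C) \<and>
           (X C \<longrightarrow> h' C \<in> {opp (h C), partner (h C)})"
  shows "\<exists>gam. (\<forall>a\<in>Omega_worm (circuits V opp) (EC V opp). \<forall>b\<in>Omega (circuits V opp) (EC V opp) 0.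
                  is_worm_path (circuits V opp) (EC V opp) a b (gam a b)) \<and>
              congestion (circuits V opp) (EC V opp) (xw V opp \<beta> h') (Omega (circuits V opp) (EC V opp) 0) gam
                \<le> real (card (circuits V opp)) ^ 5 * real (card (EC V opp))"
proof -
  interpret worm_graph "circuits V opp" "EC V opp" "xw V opp \<beta> h'"
    using assms(1) by (intro worm_graph_circuit_graph[OF _ assms(2-5)]) simp
  show ?thesis
    by (intro exI[of _ canonical_path] conjI ballI is_worm_path_canonical_path congestion_canonical_path_le)
qed

end
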